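(* $$ \begin{aligned} & \log\mathcal C_2\left(\tfrac14\right)=\frac{\log2}{8}-\frac{G}{2\pi}, \\ &\log\mathcal C_3\left(\tfrac14\right)=\frac{\log2}{32}-\frac{G}{4\pi}+\frac{7\zeta_E(3)}{16\pi^2}, \\ &\log\mathcal C_4\left(\tfrac14\right)=\frac{\log2}{128}-\frac{3G}{32\pi}-\frac{3\zeta_E(3)}{64\pi^2}+\frac{3\beta(4)}{4\pi^3}, \\ &\log\mathcal C_5\left(\tfrac14\right)=\frac{\log2}{512}-\frac{G}{32\pi}-\frac{3\zeta_E(3)}{128\pi^2}+\frac{3\beta(4)}{4\pi^3}-\frac{93\zeta_E(5)}{64\pi^4}. \end{aligned} $$
   Context: For an integer $r\ge2$ let $P_r(y)=(1-y)\exp\left(y+\frac{y^2}{2}+\cdots+\frac{y^r}{r}\right)$. The multiple cosine function of Kurokawa–Koyama of order $r\ge2$ is $\mathcal C_r(x)=\prod_{n\ge1,\ n\text{ odd}}\left\{P_r\left(\frac{x}{n/2}\right)P_r\left(-\frac{x}{n/2}\right)^{(-1)^{r-1}}\right\}^{(n/2)^{r-1}}$, interpreted as $\mathcal C_r(x)=\exp\Big(\sum_{n\ge1,\,n\text{ odd}}(n/2)^{r-1}\big[\operatorname{Log}P_r(2x/n)+(-1)^{r-1}\operatorname{Log}P_r(-2x/n)\big]\Big)$, where $\operatorname{Log}P_r(y):=\operatorname{Log}(1-y)+y+\frac{y^2}{2}+\cdots+\frac{y^r}{r}$ with $\operatorname{Log}$ the principal branch. The series converges and defines a holomorphic function on $D=\mathbb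 C\setminus\big((-\infty,-\tfrac12]\cup[\tfrac12,\infty)\big)$, positive on $(-\tfrac12,\tfrac12)$; $\log\mathcal C_r(x)$ denotes the exponent above (the real logarithm for real $|x|<\tfrac12$). $\zeta_E(s)=\sum_{n=1}^\infty\frac{(-1)^{n+1}}{n^s}$, $\beta(s)=\sum_{n=0}^\infty\frac{(-1)^n}{(2n+1)^s}$, and $G=\beta(2)$ is Catalan's constant. *)

theory Defs
  imports "HOL-Analysis.Analysis"
begin

definition LogP :: "nat \<Rightarrow> complex \<Rightarrow> complex" where
  "LogP r y = Ln (1 - y) + (\<Sum>k=1..r. y ^ k / of_nat k)"

definition logC :: "nat \<Rightarrow> complex \<Rightarrow> complex" where
  "logC r x = (\<Sum>m. (of_nat (2*m+1) / 2) ^ (r - 1) *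
      (LogP r (2 * x / of_nat (2*m+1)) +
       (-1) ^ (r - 1) * LogP r (- 2 * x / of_nat (2*m+1))))"

definition zetaE :: "nat \<Rightarrow> real" where
  "zetaE s = (\<Sum>n. (-1) ^ n / (real (n + 1)) ^ s)"

definition dbeta :: "nat \<Rightarrow> real" where
  "dbeta s = (\<Sum>n. (-1) ^ n / (real (2 * n + 1)) ^ s)"

definition catalan :: real where
  "catalan = dbeta 2"

end

theory Submission
  imports Defs
begin

text \<open>
  With \<open>c = 2/n\<close>, the \<open>x\<close>-derivative of the \<open>n\<close>-th summand
  of \<open>log C\<^sub>r(x)\<close> is \<open>x\<^sup>r\<^sup>-\<^sup>1\<close> times the derivative of \<open>ln (1 - (c x)\<^sup>2)\<close>, so integrating by parts
  and summing over odd \<open>n\<close> with the Euler product \<open>cos (\<pi>x) = \<Prod> (1 - (2x/n)\<^sup>2)\<close> gives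
  \<open>log C\<^sub>r(x) = x\<^sup>r\<^sup>-\<^sup>1 ln cos (\<pi>x) - (r-1) \<integral>\<^sub>0\<^sup>x t\<^sup>r\<^sup>-\<^sup>2 ln cos (\<pi>t) dt\<close>.
  At \<open>x = 1/4\<close> the integral is computed by integrating the Fourier series
  \<open>ln (2 cos \<pi>t) = \<Sum>\<^sub>k\<^sub>\<ge>\<^sub>1 (-1)\<^sup>k\<^sup>+\<^sup>1 cos (2\<pi>kt)/k\<close> term by term: the moments of \<open>cos (2\<pi>kt)\<close>
  over \<open>[0,1/4]\<close> involve \<open>sin (\<pi>k/2)\<close> and \<open>cos (\<pi>k/2)\<close>, which turn the resulting series
  into values of \<open>\<beta>\<close> and \<open>\<zeta>\<^sub>E\<close>.
\<close>

section \<open>The Euler product for cosine\<close>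

lemma cos_pi_pos:
  fixes x :: real
  assumes "\<bar>x\<bar> < 1/2"
  shows "cos (pi*x) > 0"
proof (rule cos_gt_zero_pi)
  have "pi * \<bar>x\<bar> < pi * (1/2)"
    using assms by (intro mult_strict_left_mono) auto
  then have "\<bar>pi*x\<bar> < pi/2"
    by (simp add: abs_mult)
  then show "- (pi/2) < pi*x" "pi*x < pi/2"
    by linarith+
qed

lemma prod_one_minus_sq_even_odd:
  fixes x :: real
  shows "(\<Prod>k=1..2*N. 1 - (2*x)^2/(real k)^2) =
         (\<Prod>m<N. 1 - (2*x/real (2*m+1))^2) * (\<Prod>k=1..N. 1 - x^2/(real k)^2)"
proof (induction N)
  case 0
  then show ?case by simp
next
  case (Suc N)
  have "{1..2*Suc N} = insert (2*N+2) (insert (2*N+1) {1..2*N})"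
    by auto
  then have "(\<Prod>k=1..2*Suc N. 1 - (2*x)^2/(real k)^2) =
      (1 - (2*x)^2/(real (2*N+2))^2) * ((1 - (2*x)^2/(real (2*N+1))^2) *
      (\<Prod>k=1..2*N. 1 - (2*x)^2/(real k)^2))"
    by simp
  also have "(2*x)^2/(real (2*N+2))^2 = x^2/(real (Suc N))^2"
  proof -
    have "real (2*N+2) = 2 * real (Suc N)"
      by simp
    then show ?thesis
      by (simp only: power_mult_distrib mult_divide_mult_cancel_left_if) simp
  qed
  also have "(2*x)^2/(real (2*N+1))^2 = (2*x/real (2*N+1))^2"
    by (simp add: power_divide)
  finally show ?case
    unfolding Suc.IH prod.lessThan_Suc prod.nat_ivl_Suc'[of 1 N] by (simp only: ac_simps) simp
qed

lemma cos_product_formula_real: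
  fixes x :: real
  assumes "0 \<le> x" "x < 1"
  shows "(\<lambda>N. \<Prod>m<N. 1 - (2*x/real (2*m+1))^2) \<longlonglongrightarrow> cos (pi*x)"
proof (cases "x = 0")
  case True
  then show ?thesis by simp
next
  case False
  with assms have x: "0 < x" by simp
  define P where "P z N = (\<Prod>k=1..N. 1 - z^2/(real k)^2)" for z :: real and N
  have P_nonzero: "P x N \<noteq> 0" for N
  proof -
    have sq_less: "x^2 < (real k)^2" if "k \<ge> 1" for k
      using x assms that by (intro power_strict_mono) auto
    have "1 - x^2/(real k)^2 \<noteq> 0" if "k \<ge> 1" for k
      using sq_less[OF that] that by (auto simp: field_simps)
    then show ?thesis
      unfolding P_def by auto
  qed
  have "P (2*x) (2*N) = (\<Prod>m<N. 1 - (2*x/real (2*m+1))^2) * P x N" for N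
    unfolding P_def by (rule prod_one_minus_sq_even_odd)
  then have "P (2*x) (2*N) / P x N = (\<Prod>m<N. 1 - (2*x/real (2*m+1))^2)" for N
    using P_nonzero[of N] by simp
  moreover have "(\<lambda>N. P (2*x) (2*N) / P x N) \<longlonglongrightarrow>
      (sin (pi*(2*x))/(pi*(2*x))) / (sin (pi*x)/(pi*x))"
  proof (intro tendsto_divide)
    show "(\<lambda>N. P (2*x) (2*N)) \<longlonglongrightarrow> sin (pi*(2*x))/(pi*(2*x))"
      using LIMSEQ_subseq_LIMSEQ[OF sin_product_formula_real'[of "2*x"], of "(*) 2"] x
      by (simp add: P_def o_def strict_mono_def)
    show "(\<lambda>N. P x N) \<longlonglongrightarrow> sin (pi*x)/(pi*x)"
      using sin_product_formula_real'[of x] x by (simp add: P_def)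
    have "sin (pi*x) > 0"
      using x assms by (intro sin_gt_zero) auto
    then show "sin (pi*x)/(pi*x) \<noteq> 0"
      using x by simp
  qed
  moreover have "(sin (pi*(2*x))/(pi*(2*x))) / (sin (pi*x)/(pi*x)) = cos (pi*x)"
  proof -
    have "sin (pi*x) \<noteq> 0"
      using x assms by (intro sin_gt_zero[THEN less_imp_neq, symmetric]) auto
    then show ?thesis
      using x sin_double[of "pi*x"] by (simp add: field_simps mult_ac)
  qed
  ultimately show ?thesis
    by simp
qed

lemma one_minus_sq_div_odd_pos:
  fixes x :: real
  assumes "\<bar>x\<bar> < 1/2"
  shows "0 < 1 - (2*x/real (2*m+1))^2"
proof -
  have "\<bar>2*x/real (2*m+1)\<bar> \<le> \<bar>2*x\<bar>"
    by (simp add: abs_divide divide_le_eq mult_le_cancel_left1)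
  also have "\<dots> < 1"
    using assms by simp
  finally have "\<bar>2*x/real (2*m+1)\<bar>^2 < 1^2"
    by (intro power_strict_mono) auto
  then have "(2*x/real (2*m+1))^2 < 1"
    by (metis power2_abs power_one)
  then show ?thesis
    by linarith
qed

lemma ln_cos_sums:
  fixes x :: real
  assumes "0 \<le> x" "x < 1/2"
  shows "(\<lambda>m. ln (1 - (2*x/real (2*m+1))^2)) sums ln (cos (pi*x))"
proof -
  have "(\<lambda>N. ln (\<Prod>m<N. 1 - (2*x/real (2*m+1))^2)) \<longlonglongrightarrow> ln (cos (pi*x))"
    using assms cos_pi_pos[of x] by (intro tendsto_ln cos_product_formula_real) auto
  moreover have "ln (\<Prod>m<N. 1 - (2*x/real (2*m+1))^2) = (\<Sum>m<N. ln (1 - (2*x/real (2*m+1))^2))" for N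
    using assms one_minus_sq_div_odd_pos[of x] by (intro ln_prod) (auto simp: less_imp_neq[symmetric])
  ultimately show ?thesis
    by (simp add: sums_def)
qed

section \<open>\<open>log C\<^sub>r\<close> as an integral of \<open>ln cos\<close>\<close>

definition lnP :: "nat \<Rightarrow> real \<Rightarrow> real" where
  "lnP r y = ln (1 - y) + (\<Sum>k=1..r. y ^ k / real k)"

lemma lnP_zero [simp]: "lnP r 0 = 0"
  unfolding lnP_def by (simp add: zero_power)

lemma LogP_of_real:
  fixes y :: real
  assumes "y < 1"
  shows "LogP r (complex_of_real y) = complex_of_real (lnP r y)"
proof -
  have "Ln (1 - complex_of_real y) = complex_of_real (ln (1 - y))"
    using Ln_of_real[of "1 - y"] assms by simp
  then show ?thesis
    unfolding LogP_def lnP_def by simp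
qed

lemma has_real_derivative_lnP:
  fixes y :: real
  assumes "y < 1"
  shows "(lnP r has_real_derivative - (y ^ r / (1 - y))) (at y)"
proof -
  have "(lnP r has_real_derivative (- inverse (1 - y) + (\<Sum>k=1..r. real k * y^(k-1) / real k))) (at y)"
    unfolding lnP_def using assms
    by (auto intro!: derivative_eq_intros simp: inverse_eq_divide)
  also have "(\<Sum>k=1..r. real k * y^(k-1) / real k) = (\<Sum>k<r. y^k)"
    by (rule sum.reindex_bij_witness[of _ Suc "\<lambda>k. k - 1"]) auto
  also have "(\<Sum>k<r. y^k) = (1 - y^r) / (1 - y)"
    using assms one_diff_power_eq[of y r] by (simp add: eq_divide_eq mult.commute)
  also have "- inverse (1 - y) + (1 - y^r) / (1 - y) = - (y ^ r / (1 - y))"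
    by (simp add: inverse_eq_divide diff_divide_distrib)
  finally show ?thesis .
qed

text \<open>With \<open>c = 2/n\<close> for odd \<open>n\<close>, \<open>lnC_term j c x\<close> is the \<open>n\<close>-th summand of \<open>logC (j+2) x\<close>,
  the factor \<open>(n/2)\<^sup>j\<^sup>+\<^sup>1\<close> being \<open>(1/c)\<^sup>j\<^sup>+\<^sup>1\<close>.\<close>
definition lnC_term :: "nat \<Rightarrow> real \<Rightarrow> real \<Rightarrow> real" where
  "lnC_term j c x = (1/c)^(j+1) * (lnP (j+2) (c*x) + (-1)^(j+1) * lnP (j+2) (-(c*x)))"

lemma has_real_derivative_lnC_term:
  assumes c: "c > 0" and x: "\<bar>c*x\<bar> < 1"
  shows "(lnC_term j c has_real_derivative x^(j+1) * (- 2*c^2*x / (1 - (c*x)^2))) (at x)"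
proof -
  have "((\<lambda>x. lnP (j+2) (c*x)) has_real_derivative - ((c*x)^(j+2) / (1 - c*x)) * c) (at x)"
    using x by (intro DERIV_chain2[where f = "lnP (j+2)", OF has_real_derivative_lnP])
      (auto intro!: derivative_eq_intros simp: abs_less_iff)
  moreover have "((\<lambda>x. lnP (j+2) (-(c*x))) has_real_derivative
      - ((-(c*x))^(j+2) / (1 - (-(c*x)))) * (-c)) (at x)"
    using x by (intro DERIV_chain2[where f = "lnP (j+2)", OF has_real_derivative_lnP])
      (auto intro!: derivative_eq_intros simp: abs_less_iff)
  ultimately have "(lnC_term j c has_real_derivative (1/c)^(j+1) *
      (- ((c*x)^(j+2) / (1 - c*x)) * c + (-1)^(j+1) * (- ((-(c*x))^(j+2) / (1 - (-(c*x)))) * (-c)))) (at x)"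
    unfolding lnC_term_def[abs_def] by (intro DERIV_cmult DERIV_add)
  also have "(1/c)^(j+1) * (- ((c*x)^(j+2) / (1 - c*x)) * c + (-1)^(j+1) * (- ((-(c*x))^(j+2) / (1 - (-(c*x)))) * (-c)))
      = x^(j+1) * (- 2*c^2*x / (1 - (c*x)^2))"
  proof -
    define A where "A = (c*x)^(j+2)"
    define S where "S = (-1::real)^(j+1)"
    define T where "T = (-(c*x))^(j+2)"
    have sign: "S * T = - A"
      unfolding A_def S_def T_def power_minus[of "c*x"] by (simp add: power_add[symmetric])
    have scale: "(1/c)^(j+1) * A * c = c^2 * x^(j+2)"
      unfolding A_def using c by (simp add: field_simps power2_eq_square)
    have nz: "1 - c*x \<noteq> 0" "1 + c*x \<noteq> 0"
      using x by (auto simp: abs_less_iff)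
    have "(1/c)^(j+1) * (- (A / (1 - c*x)) * c + S * (- (T / (1 - (-(c*x)))) * (-c)))
        = (1/c)^(j+1) * (- (A / (1 - c*x)) * c + (S * T) * c / (1 + c*x))"
      by (simp add: algebra_simps)
    also have "\<dots> = (1/c)^(j+1) * A * c * (- 1 / (1 - c*x) - 1 / (1 + c*x))"
      unfolding sign by (simp add: algebra_simps)
    also have "\<dots> = x^(j+1) * (- 2*c^2*x / (1 - (c*x)^2))"
      unfolding scale using nz by (simp add: field_simps power2_eq_square)
    finally show ?thesis
      unfolding A_def S_def T_def .
  qed
  finally show ?thesis .
qed

lemma has_real_derivative_ln_one_minus_sq:
  fixes c x :: real
  assumes "\<bar>c*x\<bar> < 1"
  shows "((\<lambda>x. ln (1 - (c*x)^2)) has_real_derivative - 2*c^2*x / (1 - (c*x)^2)) (at x)"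
proof -
  have "(c*x)^2 < 1"
    using assms by (simp add: abs_square_less_1)
  then show ?thesis
    by (auto intro!: derivative_eq_intros simp: field_simps power2_eq_square)
qed

lemma has_integral_ln_one_minus_sq:
  fixes c b :: real
  assumes c: "c > 0" and b: "0 \<le> b" "c*b < 1"
  shows "((\<lambda>x. x^j * ln (1 - (c*x)^2)) has_integral
           (b^(j+1) * ln (1 - (c*b)^2) - lnC_term j c b) / real (j+1)) {0..b}"
proof -
  define H where "H x = lnC_term j c x - x^(j+1) * ln (1 - (c*x)^2)" for x
  have "((\<lambda>x. - real (j+1) * (x^j * ln (1 - (c*x)^2))) has_integral H b - H 0) {0..b}"
  proof (rule fundamental_theorem_of_calculus[OF b(1)])
    fix x assume x: "x \<in> {0..b}"
    then have "c*x \<le> c*b" "0 \<le> c*x"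
      using c by (auto intro: mult_left_mono)
    with b have cx: "\<bar>c*x\<bar> < 1"
      by simp
    have "((\<lambda>x. x^(j+1)) has_real_derivative real (j+1) * x^j) (at x)"
      using DERIV_pow[of "j+1" x] by simp
    then have "(H has_real_derivative x^(j+1) * (- 2*c^2*x / (1 - (c*x)^2)) -
        (x^(j+1) * (- 2*c^2*x / (1 - (c*x)^2)) + real (j+1) * x^j * ln (1 - (c*x)^2))) (at x)"
      unfolding H_def[abs_def]
      by (intro DERIV_diff DERIV_mult' has_real_derivative_lnC_term has_real_derivative_ln_one_minus_sq c cx)
    then have "(H has_real_derivative - real (j+1) * (x^j * ln (1 - (c*x)^2))) (at x)"
      by (simp add: algebra_simps)
    then show "(H has_vector_derivative - real (j+1) * (x^j * ln (1 - (c*x)^2))) (at x within {0..b})"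
      by (simp add: has_real_derivative_iff_has_vector_derivative has_vector_derivative_at_within)
  qed
  moreover have "H 0 = 0"
    by (simp add: H_def lnC_term_def)
  ultimately have "((\<lambda>x. (- 1 / real (j+1)) * (- real (j+1) * (x^j * ln (1 - (c*x)^2)))) has_integral
      (- 1 / real (j+1)) * H b) {0..b}"
    by (intro has_integral_mult_right) simp
  moreover have "(- 1 / real (j+1)) * (- real (j+1) * y) = y" for y :: real
    by (simp add: field_simps)
  ultimately show ?thesis
    by (simp add: H_def diff_divide_distrib)
qed

lemma has_integral_ln_one_minus_odd_sq:
  fixes b :: real
  assumes "0 \<le> b" "b < 1/2"
  shows "((\<lambda>x. x^j * ln (1 - (2*x/real (2*m+1))^2)) has_integral
           (b^(j+1) * ln (1 - (2*b/real (2*m+1))^2) - lnC_term j (2/real (2*m+1)) b) / real (j+1)) {0..b}"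
proof -
  have "2/real (2*m+1) * b \<le> 2 * b"
    using assms by (simp add: divide_le_eq mult_le_cancel_left1)
  with assms show ?thesis
    using has_integral_ln_one_minus_sq[of "2/real (2*m+1)" b j] by simp
qed

lemma sums_integral_ln_one_minus_sq:
  fixes b :: real
  assumes b: "0 \<le> b" "b < 1/2"
  shows "(\<lambda>m. integral {0..b} (\<lambda>x. x^j * ln (1 - (2*x/real (2*m+1))^2)))
           sums integral {0..b} (\<lambda>x. x^j * ln (cos (pi*x)))"
proof -
  define f where "f N x = (\<Sum>m<N. x^j * ln (1 - (2*x/real (2*m+1))^2))" for N x
  have x_range: "0 \<le> x" "x < 1/2" if "x \<in> {0..b}" for x
    using that b by auto
  have cos_pos: "cos (pi*x) > 0" if "x \<in> {0..b}" for x
    using x_range[OF that] by (intro cos_pi_pos) simp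
  have "f N integrable_on {0..b}" for N
    unfolding f_def using has_integral_ln_one_minus_odd_sq[OF b]
    by (intro integrable_sum finite_lessThan) (auto simp: integrable_on_def)
  moreover have "(\<lambda>x. - ln (cos (pi*x))) integrable_on {0..b}"
    using cos_pos by (intro integrable_continuous_interval continuous_intros) fastforce
  moreover have "norm (f N x) \<le> - ln (cos (pi*x))" if "x \<in> {0..b}" for N x
  proof -
    note x = x_range[OF that]
    have terms: "(\<lambda>m. - ln (1 - (2*x/real (2*m+1))^2)) sums - ln (cos (pi*x))"
      using sums_minus[OF ln_cos_sums[OF x]] .
    have nonneg: "0 \<le> - ln (1 - (2*x/real (2*m+1))^2)" for m
      using one_minus_sq_div_odd_pos[of x m] x by simp
    then have "(\<Sum>m<N. - ln (1 - (2*x/real (2*m+1))^2)) \<le> - ln (cos (pi*x))"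
      using sum_le_suminf[OF sums_summable[OF terms], of "{..<N}"] sums_unique[OF terms] by simp
    moreover have "\<bar>\<Sum>m<N. ln (1 - (2*x/real (2*m+1))^2)\<bar> = (\<Sum>m<N. - ln (1 - (2*x/real (2*m+1))^2))"
      using nonneg by (simp add: abs_of_nonpos sum_nonpos sum_negf)
    ultimately have "\<bar>\<Sum>m<N. ln (1 - (2*x/real (2*m+1))^2)\<bar> \<le> - ln (cos (pi*x))"
      by simp
    moreover have "\<bar>x^j\<bar> \<le> 1"
      using x by (simp add: power_le_one)
    ultimately have "\<bar>x^j\<bar> * \<bar>\<Sum>m<N. ln (1 - (2*x/real (2*m+1))^2)\<bar> \<le> 1 * - ln (cos (pi*x))"
      by (intro mult_mono) auto
    then show ?thesis
      by (simp add: f_def sum_distrib_left[symmetric] abs_mult)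
  qed
  moreover have "(\<lambda>N. f N x) \<longlonglongrightarrow> x^j * ln (cos (pi*x))" if "x \<in> {0..b}" for x
    using sums_mult[OF ln_cos_sums[OF x_range[OF that]], of "x^j"] by (simp add: f_def sums_def)
  ultimately have "(\<lambda>N. integral {0..b} (f N)) \<longlonglongrightarrow> integral {0..b} (\<lambda>x. x^j * ln (cos (pi*x)))"
    by (rule dominated_convergence(2))
  moreover have "integral {0..b} (f N) = (\<Sum>m<N. integral {0..b} (\<lambda>x. x^j * ln (1 - (2*x/real (2*m+1))^2)))" for N
    unfolding f_def using has_integral_ln_one_minus_odd_sq[OF b]
    by (intro integral_sum finite_lessThan) (auto simp: integrable_on_def)
  ultimately show ?thesis
    by (simp add: sums_def)
qed

lemma logC_summand_of_real:
  fixes x :: real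
  assumes "0 \<le> x" "x < 1/2"
  shows "(of_nat (2*m+1) / 2) ^ (j+2-1) *
      (LogP (j+2) (2 * complex_of_real x / of_nat (2*m+1)) +
       (-1) ^ (j+2-1) * LogP (j+2) (- 2 * complex_of_real x / of_nat (2*m+1)))
    = complex_of_real (lnC_term j (2/real (2*m+1)) x)"
proof -
  have "2/real (2*m+1) * x \<le> 2 * x" "0 \<le> 2/real (2*m+1) * x"
    using assms by (simp_all add: divide_le_eq mult_le_cancel_left1)
  with assms have "2/real (2*m+1) * x < 1" "- (2/real (2*m+1) * x) < 1"
    by auto
  moreover have "2 * complex_of_real x / of_nat (2*m+1) = complex_of_real (2/real (2*m+1) * x)"
    "- 2 * complex_of_real x / of_nat (2*m+1) = complex_of_real (- (2/real (2*m+1) * x))"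
    "of_nat (2*m+1) / 2 = complex_of_real (1 / (2/real (2*m+1)))"
    by simp_all
  ultimately show ?thesis
    unfolding lnC_term_def by (simp only: LogP_of_real) simp
qed

lemma logC_eq_integral_ln_cos:
  fixes x :: real
  assumes x: "0 \<le> x" "x < 1/2"
  shows "logC (j+2) (complex_of_real x) = complex_of_real
           (x^(j+1) * ln (cos (pi*x)) - real (j+1) * integral {0..x} (\<lambda>t. t^j * ln (cos (pi*t))))"
proof -
  have "lnC_term j (2/real (2*m+1)) x = x^(j+1) * ln (1 - (2*x/real (2*m+1))^2)
      - real (j+1) * integral {0..x} (\<lambda>t. t^j * ln (1 - (2*t/real (2*m+1))^2))" for m
    using integral_unique[OF has_integral_ln_one_minus_odd_sq[OF x, of j m]] by (simp add: field_simps)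
  moreover have "(\<lambda>m. x^(j+1) * ln (1 - (2*x/real (2*m+1))^2)
      - real (j+1) * integral {0..x} (\<lambda>t. t^j * ln (1 - (2*t/real (2*m+1))^2))) sums
      (x^(j+1) * ln (cos (pi*x)) - real (j+1) * integral {0..x} (\<lambda>t. t^j * ln (cos (pi*t))))"
    by (intro sums_diff sums_mult ln_cos_sums sums_integral_ln_one_minus_sq x)
  ultimately have "(\<lambda>m. complex_of_real (lnC_term j (2/real (2*m+1)) x)) sums complex_of_real
      (x^(j+1) * ln (cos (pi*x)) - real (j+1) * integral {0..x} (\<lambda>t. t^j * ln (cos (pi*t))))"
    by (intro sums_of_real) simp
  then show ?thesis
    unfolding logC_def logC_summand_of_real[OF x] by (rule sums_unique[symmetric])
qed

section \<open>The Fourier series of \<open>ln (2 cos \<pi>x)\<close>\<close>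

lemma geometric_remainder_eq:
  fixes u w :: complex
  assumes "1 + w \<noteq> 0"
  shows "inverse (1 + w) * u - (\<Sum>k<N. u * (-w)^k) = u * (-w)^N / (1 + w)"
proof -
  define S where "S = (\<Sum>k<N. (-w)^k)"
  have "(1 + w) * S = 1 - (-w)^N"
    unfolding S_def using one_diff_power_eq[of "-w" N] by simp
  then have S_eq: "S = (1 - (-w)^N) / (1 + w)"
    using assms by (simp add: eq_divide_eq mult.commute)
  have "inverse (1 + w) * u - u * S = (u - u * (1 - (-w)^N)) / (1 + w)"
    unfolding S_eq by (simp add: inverse_eq_divide diff_divide_distrib right_diff_distrib)
  also have "\<dots> = u * (-w)^N / (1 + w)"
    by (simp add: algebra_simps)
  finally show ?thesis
    unfolding sum_distrib_left[symmetric] S_def .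
qed

lemma has_field_derivative_Ln_series_remainder:
  fixes u z :: complex
  assumes "Re (1 + z*u) > 0"
  shows "((\<lambda>z. Ln (1 + z*u) - (\<Sum>k<N. (-1)^k * (z*u)^(k+1) / of_nat (k+1)))
          has_field_derivative u * (-(z*u))^N / (1 + z*u)) (at z)"
proof -
  have "1 + z*u \<notin> \<real>\<^sub>\<le>\<^sub>0"
    using assms by (auto simp: complex_nonpos_Reals_iff)
  then have Ln: "((\<lambda>z. Ln (1 + z*u)) has_field_derivative inverse (1 + z*u) * u) (at z)"
    by (auto intro!: derivative_eq_intros)
  have "((\<lambda>z. (-1)^k * (z*u)^(k+1) / of_nat (k+1)) has_field_derivative u * (-(z*u))^k) (at z)" for k
  proof -
    have "((\<lambda>z. (-1)^k * (z*u)^(k+1) / of_nat (k+1)) has_field_derivative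
          (-1)^k * (of_nat (k+1) * (z*u)^k * u) / of_nat (k+1)) (at z)"
      by (auto intro!: derivative_eq_intros simp del: of_nat_Suc power_Suc)
    also have "(-1)^k * (of_nat (k+1) * (z*u)^k * u) / of_nat (k+1) = (-1)^k * (z*u)^k * u"
      by (simp del: of_nat_Suc)
    also have "\<dots> = u * ((-1)^k * (z*u)^k)"
      by (simp only: mult_ac)
    also have "\<dots> = u * (-(z*u))^k"
      by (simp only: power_minus[of "z*u" k])
    finally show ?thesis .
  qed
  then have "((\<lambda>z. Ln (1 + z*u) - (\<Sum>k<N. (-1)^k * (z*u)^(k+1) / of_nat (k+1)))
          has_field_derivative inverse (1 + z*u) * u - (\<Sum>k<N. u * (-(z*u))^k)) (at z)"
    by (intro DERIV_diff Ln DERIV_sum)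
  moreover have "1 + z*u \<noteq> 0"
    using assms by (metis less_irrefl zero_complex.sel(1))
  ultimately show ?thesis
    using geometric_remainder_eq DERIV_cong by blast
qed

text \<open>The remainder is \<open>\<integral>\<^sub>0\<^sup>1 u (-su)\<^sup>N / (1 + su) ds\<close> and \<open>\<bar>1 + su\<bar> \<ge> 1\<close> for \<open>Re u \<ge> 0\<close>; this gives
  convergence of the logarithmic series on the boundary arc \<open>\<bar>u\<bar> = 1\<close>, where it is not absolutely convergent.\<close>
lemma norm_Ln_series_remainder_le:
  fixes u :: complex
  assumes u: "norm u \<le> 1" "Re u \<ge> 0"
  shows "norm (Ln (1 + u) - (\<Sum>k<N. (-1)^k * u^(k+1) / of_nat (k+1))) \<le> 1 / real (N+1)"
proof -
  define h where "h s = Ln (1 + of_real s * u) - (\<Sum>k<N. (-1)^k * (of_real s * u)^(k+1) / of_nat (k+1))"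
    for s :: real
  define h' where "h' s = u * (-(of_real s * u))^N / (1 + of_real s * u)" for s :: real
  have Re_ge: "Re (1 + of_real s * u) \<ge> 1" if "s \<in> {0..1}" for s
    using that u by simp
  have I: "(h' has_integral (h 1 - h 0)) {0..1}"
  proof (rule fundamental_theorem_of_calculus)
    fix s :: real assume "s \<in> {0..1}"
    then show "(h has_vector_derivative h' s) (at s within {0..1})"
      unfolding h_def h'_def using Re_ge
      by (intro has_vector_derivative_real_field has_field_derivative_Ln_series_remainder) force
  qed simp
  have G: "((\<lambda>s. s^N) has_integral (1^(N+1) / real (N+1) - 0^(N+1) / real (N+1))) {0..1::real}"
    by (rule fundamental_theorem_of_calculus)
      (auto intro!: derivative_eq_intros simp: has_real_derivative_iff_has_vector_derivative[symmetric]
        simp del: power_Suc)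
  have bound: "norm (h' s) \<le> s^N" if "s \<in> {0..1}" for s
  proof -
    have "1 \<le> norm (1 + of_real s * u)"
      using Re_ge[OF that] complex_Re_le_cmod[of "1 + of_real s * u"] by linarith
    then have "norm (h' s) \<le> norm (u * (-(of_real s * u))^N)"
      unfolding h'_def norm_divide by (simp add: divide_le_eq mult_le_cancel_left1)
    also have "\<dots> = norm u * (s * norm u)^N"
      using that by (simp add: norm_mult norm_power)
    also have "\<dots> \<le> 1 * (s * 1)^N"
      using that u by (intro mult_mono power_mono mult_left_mono) auto
    finally show ?thesis
      by simp
  qed
  have "norm (h 1 - h 0) \<le> 1 / real (N+1)"
    using integral_norm_bound_integral[OF has_integral_integrable[OF I] has_integral_integrable[OF G] bound]
    by (simp add: integral_unique[OF I] integral_unique[OF G])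
  then show ?thesis
    by (simp add: h_def)
qed

lemma one_plus_cis: "1 + cis t = complex_of_real (2 * cos (t/2)) * cis (t/2)"
proof -
  have "cos t = 2 * cos (t/2)^2 - 1" "sin t = 2 * sin (t/2) * cos (t/2)"
    using cos_double_cos[of "t/2"] sin_double[of "t/2"] by simp_all
  then show ?thesis
    by (intro complex_eqI) (simp_all add: power2_eq_square)
qed

lemma Re_Ln_one_plus_cis:
  fixes x :: real
  assumes "\<bar>x\<bar> < 1/2"
  shows "Re (Ln (1 + cis (2*pi*x))) = ln (2 * cos (pi*x))"
proof -
  have c: "cos (pi*x) > 0"
    using assms by (rule cos_pi_pos)
  have e: "1 + cis (2*pi*x) = complex_of_real (2 * cos (pi*x)) * cis (pi*x)"
    using one_plus_cis[of "2*pi*x"] by simp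
  then have "1 + cis (2*pi*x) \<noteq> 0"
    using c by simp
  moreover have "norm (1 + cis (2*pi*x)) = 2 * cos (pi*x)"
    unfolding e norm_mult using c by simp
  ultimately show ?thesis
    by simp
qed

lemma Re_sum_cis_power:
  "Re (\<Sum>k<N. (-1)^k * (cis t)^(k+1) / of_nat (k+1)) = (\<Sum>k<N. (-1)^k * cos (real (k+1) * t) / real (k+1))"
proof -
  have cis_term: "(-1)^k * (cis t)^(k+1) / of_nat (k+1) = complex_of_real ((-1)^k / real (k+1)) * cis (real (k+1) * t)"
    for k
    unfolding Complex.DeMoivre by simp
  have "Re ((-1)^k * (cis t)^(k+1) / of_nat (k+1)) = (-1)^k * cos (real (k+1) * t) / real (k+1)" for k
    unfolding cis_term by simp
  then show ?thesis
    by (simp add: Re_sum)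
qed

lemma ln_two_cos_fourier:
  fixes x :: real
  assumes x: "0 \<le> x" "x \<le> 1/4"
  shows "(\<lambda>N. \<Sum>k<N. (-1)^k * cos (2*pi*real (k+1)*x) / real (k+1)) \<longlonglongrightarrow> ln (2 * cos (pi*x))"
    and "\<bar>\<Sum>k<N. (-1)^k * cos (2*pi*real (k+1)*x) / real (k+1)\<bar> \<le> 2"
proof -
  define u where "u = cis (2*pi*x)"
  define S where "S N = (\<Sum>k<N. (-1)^k * u^(k+1) / of_nat (k+1))" for N
  have Re_S: "Re (S N) = (\<Sum>k<N. (-1)^k * cos (2*pi*real (k+1)*x) / real (k+1))" for N
    unfolding S_def u_def Re_sum_cis_power by (simp add: mult_ac)
  have Re_Ln: "Re (Ln (1 + u)) = ln (2 * cos (pi*x))"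
    unfolding u_def using x by (intro Re_Ln_one_plus_cis) simp
  have "2*pi*x \<le> pi/2" "0 \<le> 2*pi*x"
    using x by simp_all
  then have "cos (2*pi*x) \<ge> 0"
    using pi_gt_zero by (intro cos_ge_zero) linarith+
  then have remainder: "norm (S N - Ln (1 + u)) \<le> 1 / real (N+1)" for N
    unfolding S_def u_def using norm_Ln_series_remainder_le[of "cis (2*pi*x)" N]
    by (simp add: norm_minus_commute)
  have "(\<lambda>N. S N - Ln (1 + u)) \<longlonglongrightarrow> 0"
    using remainder by (intro Lim_null_comparison[OF _ LIMSEQ_inverse_real_of_nat] always_eventually)
      (simp add: inverse_eq_divide)
  then have "(\<lambda>N. Re (S N)) \<longlonglongrightarrow> Re (Ln (1 + u))"
    by (intro tendsto_Re) (simp add: Lim_null[symmetric])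
  then show "(\<lambda>N. \<Sum>k<N. (-1)^k * cos (2*pi*real (k+1)*x) / real (k+1)) \<longlonglongrightarrow> ln (2 * cos (pi*x))"
    unfolding Re_S Re_Ln .
  have "1 / real (N+1) \<le> 1"
    by simp
  then have "\<bar>Re (S N) - Re (Ln (1 + u))\<bar> \<le> 1"
    using abs_Re_le_cmod[of "S N - Ln (1 + u)"] remainder[of N] by (simp only: minus_complex.sel)
  moreover have "0 \<le> Re (Ln (1 + u))" "Re (Ln (1 + u)) \<le> 1"
  proof -
    have "cos (pi/3) \<le> cos (pi*x)"
      using x by (intro cos_monotone_0_pi_le) auto
    then have "1 \<le> 2 * cos (pi*x)"
      by (simp add: cos_60)
    then have "0 \<le> ln (2 * cos (pi*x))" "ln (2 * cos (pi*x)) \<le> ln 2"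
      by (auto simp del: ln_mult_pos)
    then show "0 \<le> Re (Ln (1 + u))" "Re (Ln (1 + u)) \<le> 1"
      unfolding Re_Ln using ln_2_less_1 by linarith+
  qed
  ultimately show "\<bar>\<Sum>k<N. (-1)^k * cos (2*pi*real (k+1)*x) / real (k+1)\<bar> \<le> 2"
    unfolding Re_S by linarith
qed

lemma integral_ln_two_cos_termwise:
  fixes F :: "real \<Rightarrow> real"
  assumes F: "\<And>n. n \<noteq> 0 \<Longrightarrow> ((\<lambda>x. x^j * cos (2*pi*n*x)) has_integral F n) {0..1/4}"
    and sums: "(\<lambda>k. (-1)^k / real (k+1) * F (real (k+1))) sums E"
  shows "integral {0..1/4} (\<lambda>x. x^j * ln (2 * cos (pi*x))) = E"
proof -
  define f where "f N x = (\<Sum>k<N. (-1)^k / real (k+1) * (x^j * cos (2*pi*real (k+1)*x)))" for N x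
  have f_eq: "f N x = x^j * (\<Sum>k<N. (-1)^k * cos (2*pi*real (k+1)*x) / real (k+1))" for N x
    unfolding f_def sum_distrib_left by (intro sum.cong) auto
  have f_integral: "(f N has_integral (\<Sum>k<N. (-1)^k / real (k+1) * F (real (k+1)))) {0..1/4}" for N
    unfolding f_def by (intro has_integral_sum finite_lessThan has_integral_mult_right F) simp
  then have "f N integrable_on {0..1/4}" for N
    by blast
  moreover have "(\<lambda>x. 2::real) integrable_on {0..1/4::real}"
    by (intro integrable_continuous_interval continuous_on_const)
  moreover have "norm (f N x) \<le> 2" if "x \<in> {0..1/4}" for N x
  proof -
    have x: "0 \<le> x" "x \<le> 1/4"
      using that by auto
    then have "\<bar>x^j\<bar> * \<bar>\<Sum>k<N. (-1)^k * cos (2*pi*real (k+1)*x) / real (k+1)\<bar> \<le> 1 * 2"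
      by (intro mult_mono ln_two_cos_fourier(2)) (auto simp: power_le_one)
    then show ?thesis
      by (simp add: f_eq abs_mult)
  qed
  moreover have "(\<lambda>N. f N x) \<longlonglongrightarrow> x^j * ln (2 * cos (pi*x))" if "x \<in> {0..1/4}" for x
    unfolding f_eq using that by (intro tendsto_mult_left ln_two_cos_fourier(1)) auto
  ultimately have "(\<lambda>N. integral {0..1/4} (f N)) \<longlonglongrightarrow> integral {0..1/4} (\<lambda>x. x^j * ln (2 * cos (pi*x)))"
    by (rule dominated_convergence(2))
  moreover have "(\<lambda>N. integral {0..1/4} (f N)) \<longlonglongrightarrow> E"
    using sums unfolding sums_def integral_unique[OF f_integral] .
  ultimately show ?thesis
    by (rule LIMSEQ_unique)
qed

section \<open>Moments over \<open>[0, 1/4]\<close>\<close>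

lemma has_integral_real_antiderivative:
  fixes F f :: "real \<Rightarrow> real"
  assumes "a \<le> b" "\<And>x. (F has_real_derivative f x) (at x)"
  shows "(f has_integral (F b - F a)) {a..b}"
  using assms
  by (intro fundamental_theorem_of_calculus)
    (auto simp: has_real_derivative_iff_has_vector_derivative[symmetric] intro: DERIV_subset)

lemma has_integral_x0_cos:
  fixes n :: real
  assumes "n \<noteq> 0"
  shows "((\<lambda>x. x^0 * cos (2*pi*n*x)) has_integral sin (pi*n/2) / (2*pi*n)) {0..1/4}"
proof -
  define w where "w = 2*pi*n"
  have w: "w \<noteq> 0" "w * (1/4) = pi*n/2"
    using assms by (simp_all add: w_def)
  define F where "F x = sin (w*x) / w" for x
  have "((\<lambda>x. x^0 * cos (w*x)) has_integral F (1/4) - F 0) {0..1/4}"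
    using w by (intro has_integral_real_antiderivative) (auto intro!: derivative_eq_intros simp: F_def)
  moreover have "F (1/4) - F 0 = sin (pi*n/2) / (2*pi*n)"
    unfolding F_def w(2) by (simp add: w_def)
  ultimately show ?thesis
    by (simp add: w_def)
qed

lemma has_integral_x1_cos:
  fixes n :: real
  assumes "n \<noteq> 0"
  shows "((\<lambda>x. x^1 * cos (2*pi*n*x)) has_integral
           sin (pi*n/2) / (8*pi*n) + (cos (pi*n/2) - 1) / (4*pi^2*n^2)) {0..1/4}"
proof -
  define w where "w = 2*pi*n"
  have w: "w \<noteq> 0" "w * (1/4) = pi*n/2"
    using assms by (simp_all add: w_def)
  define F where "F x = x * sin (w*x) / w + cos (w*x) / w^2" for x
  have "((\<lambda>x. x^1 * cos (w*x)) has_integral F (1/4) - F 0) {0..1/4}"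
    using w by (intro has_integral_real_antiderivative)
      (auto intro!: derivative_eq_intros simp: F_def field_simps power2_eq_square)
  moreover have "F (1/4) - F 0 = sin (pi*n/2) / (8*pi*n) + (cos (pi*n/2) - 1) / (4*pi^2*n^2)"
    unfolding F_def w(2) using assms by (simp add: w_def field_simps power2_eq_square)
  ultimately show ?thesis
    by (simp add: w_def)
qed

lemma has_integral_x2_cos:
  fixes n :: real
  assumes "n \<noteq> 0"
  shows "((\<lambda>x. x^2 * cos (2*pi*n*x)) has_integral
           sin (pi*n/2) / (32*pi*n) + cos (pi*n/2) / (8*pi^2*n^2) - sin (pi*n/2) / (4*pi^3*n^3)) {0..1/4}"
proof -
  define w where "w = 2*pi*n"
  have w: "w \<noteq> 0" "w * (1/4) = pi*n/2"
    using assms by (simp_all add: w_def)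
  define F where "F x = x^2 * sin (w*x) / w + 2*x * cos (w*x) / w^2 - 2 * sin (w*x) / w^3" for x
  have "((\<lambda>x. x^2 * cos (w*x)) has_integral F (1/4) - F 0) {0..1/4}"
    using w by (intro has_integral_real_antiderivative)
      (auto intro!: derivative_eq_intros simp: F_def field_simps power2_eq_square power3_eq_cube)
  moreover have "F (1/4) - F 0 =
      sin (pi*n/2) / (32*pi*n) + cos (pi*n/2) / (8*pi^2*n^2) - sin (pi*n/2) / (4*pi^3*n^3)"
    unfolding F_def w(2) using assms by (simp add: w_def field_simps power2_eq_square power3_eq_cube)
  ultimately show ?thesis
    by (simp add: w_def)
qed

lemma has_integral_x3_cos:
  fixes n :: real
  assumes "n \<noteq> 0"
  shows "((\<lambda>x. x^3 * cos (2*pi*n*x)) has_integral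
           sin (pi*n/2) / (128*pi*n) + 3 * cos (pi*n/2) / (64*pi^2*n^2) - 3 * sin (pi*n/2) / (16*pi^3*n^3)
           - 3 * (cos (pi*n/2) - 1) / (8*pi^4*n^4)) {0..1/4}"
proof -
  define w where "w = 2*pi*n"
  have w: "w \<noteq> 0" "w * (1/4) = pi*n/2"
    using assms by (simp_all add: w_def)
  define F where
    "F x = x^3 * sin (w*x) / w + 3*x^2 * cos (w*x) / w^2 - 6*x * sin (w*x) / w^3 - 6 * cos (w*x) / w^4" for x
  have "((\<lambda>x. x^3 * cos (w*x)) has_integral F (1/4) - F 0) {0..1/4}"
    using w by (intro has_integral_real_antiderivative)
      (auto intro!: derivative_eq_intros simp: F_def field_simps power2_eq_square power3_eq_cube power4_eq_xxxx)
  moreover have "F (1/4) - F 0 =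
      sin (pi*n/2) / (128*pi*n) + 3 * cos (pi*n/2) / (64*pi^2*n^2) - 3 * sin (pi*n/2) / (16*pi^3*n^3)
      - 3 * (cos (pi*n/2) - 1) / (8*pi^4*n^4)"
    unfolding F_def w(2) using assms
    by (simp add: w_def field_simps power2_eq_square power3_eq_cube power4_eq_xxxx)
  ultimately show ?thesis
    by (simp add: w_def)
qed

lemma sin_pi_odd_half: "sin (pi * real (2*m+1) / 2) = (-1)^m"
proof -
  have "pi * real (2*m+1) / 2 = real m * pi + pi/2"
    by (simp add: field_simps)
  then show ?thesis
    by (simp only: sin_add) simp
qed

lemma cos_pi_odd_half: "cos (pi * real (2*m+1) / 2) = 0"
proof -
  have "pi * real (2*m+1) / 2 = real m * pi + pi/2"
    by (simp add: field_simps)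
  then show ?thesis
    by (simp only: cos_add) simp
qed

lemma sin_pi_even_half: "sin (pi * real (2*m+2) / 2) = 0"
proof -
  have "pi * real (2*m+2) / 2 = real (m+1) * pi"
    by (simp add: field_simps)
  then show ?thesis
    by (simp only: sin_npi)
qed

lemma cos_pi_even_half: "cos (pi * real (2*m+2) / 2) = (-1)^(m+1)"
proof -
  have "pi * real (2*m+2) / 2 = real (m+1) * pi"
    by (simp add: field_simps)
  then show ?thesis
    by (simp only: cos_npi)
qed

lemma summable_inverse_power_Suc:
  assumes "2 \<le> p"
  shows "summable (\<lambda>k. 1 / real (k+1)^p)"
  using summable_ignore_initial_segment[OF inverse_power_summable[OF assms], of 1]
  by (simp add: inverse_eq_divide)

lemma sums_zetaE:
  assumes "2 \<le> p"
  shows "(\<lambda>k. (-1)^k / real (k+1)^p) sums zetaE p"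
proof -
  have "summable (\<lambda>k. (-1)^k / real (k+1)^p)"
    by (rule summable_comparison_test'[OF summable_inverse_power_Suc[OF assms]]) (simp add: abs_divide)
  then show ?thesis
    unfolding zetaE_def by (simp add: summable_sums)
qed

lemma sums_dbeta_sin:
  assumes "2 \<le> p"
  shows "(\<lambda>k. (-1)^k * sin (pi * real (k+1) / 2) / real (k+1)^p) sums dbeta p"
proof -
  define f where "f k = (-1)^k * sin (pi * real (k+1) / 2) / real (k+1)^p" for k
  have "f n = 0" if "n \<notin> range (\<lambda>m. 2*m)" for n
  proof -
    from that obtain m where "n = 2*m+1"
      by (metis oddE rangeI evenE)
    then show ?thesis
      using sin_pi_even_half[of m] by (simp add: f_def)
  qed
  moreover have "summable (\<lambda>m. (-1)^m / real (2*m+1)^p)"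
  proof (rule summable_comparison_test'[OF summable_inverse_power_Suc[OF assms]])
    fix m :: nat
    have "real (m+1)^p \<le> real (2*m+1)^p"
      by (intro power_mono) auto
    then show "norm ((-1)^m / real (2*m+1)^p) \<le> 1 / real (m+1)^p"
      by (simp add: abs_divide frac_le)
  qed
  then have "(\<lambda>m. f (2*m)) sums dbeta p"
    unfolding dbeta_def f_def using sin_pi_odd_half by (simp add: summable_sums)
  ultimately have "f sums dbeta p"
    using sums_mono_reindex[of "\<lambda>m. 2*m" f] by (simp add: strict_mono_def)
  then show ?thesis
    unfolding f_def .
qed

lemma sums_zetaE_cos:
  assumes "2 \<le> p"
  shows "(\<lambda>k. (-1)^k * cos (pi * real (k+1) / 2) / real (k+1)^p) sums (zetaE p / 2^p)"
proof -
  define f where "f k = (-1)^k * cos (pi * real (k+1) / 2) / real (k+1)^p" for k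
  have "f n = 0" if "n \<notin> range (\<lambda>m. 2*m+1)" for n
  proof -
    from that obtain m where "n = 2*m"
      by (metis oddE rangeI evenE)
    then show ?thesis
      using cos_pi_odd_half[of m] by (simp add: f_def)
  qed
  moreover have "f (2*m+1) = (-1)^m / real (m+1)^p / 2^p" for m
  proof -
    have "real (2*m+1+1)^p = 2^p * real (m+1)^p"
      by (simp add: power_mult_distrib[symmetric] algebra_simps)
    then show ?thesis
      unfolding f_def using cos_pi_even_half[of m] by (simp add: power_add)
  qed
  then have "(\<lambda>m. f (2*m+1)) sums (zetaE p / 2^p)"
    using sums_divide[OF sums_zetaE[OF assms]] by simp
  ultimately have "f sums (zetaE p / 2^p)"
    using sums_mono_reindex[of "\<lambda>m. 2*m+1" f] by (simp add: strict_mono_def)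
  then show ?thesis
    unfolding f_def .
qed

lemma integral_x0_ln_two_cos:
  "integral {0..1/4} (\<lambda>x. x^0 * ln (2 * cos (pi*x))) = dbeta 2 / (2*pi)"
proof -
  let ?s = "\<lambda>p k. (-1)^k * sin (pi * real (k+1) / 2) / real (k+1)^p"
  have coeff: "sg / K * (sn / (2*pi*K)) = sg * sn / K^2 / (2*pi)" for sg sn K :: real
    by (simp add: field_simps power2_eq_square)
  have "(\<lambda>k. ?s 2 k / (2*pi)) sums (dbeta 2 / (2*pi))"
    by (intro sums_divide sums_dbeta_sin) simp
  then have "(\<lambda>k. (-1)^k / real (k+1) * (sin (pi * real (k+1) / 2) / (2*pi*real (k+1))))
      sums (dbeta 2 / (2*pi))"
    by (simp only: coeff)
  from integral_ln_two_cos_termwise[OF has_integral_x0_cos this] show ?thesis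
    by simp
qed

lemma integral_x1_ln_two_cos:
  "integral {0..1/4} (\<lambda>x. x^1 * ln (2 * cos (pi*x))) = dbeta 2 / (8*pi) - 7 * zetaE 3 / (32*pi^2)"
proof -
  let ?s = "\<lambda>p k. (-1)^k * sin (pi * real (k+1) / 2) / real (k+1)^p"
  let ?c = "\<lambda>p k. (-1)^k * cos (pi * real (k+1) / 2) / real (k+1)^p"
  let ?z = "\<lambda>p k. (-1)^k / real (k+1)^p"
  have nonzero: "real (k+1) \<noteq> 0" for k :: nat
    by simp
  have coeff: "sg / K * (sn / (8*pi*K) + (cs - 1) / (4*pi^2*K^2))
      = sg * sn / K^2 / (8*pi) + sg * cs / K^3 / (4*pi^2) - sg / K^3 / (4*pi^2)"
    if "K \<noteq> 0" for sg sn cs K :: real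
    using that by (simp add: field_simps power2_eq_square power3_eq_cube)
  have "(\<lambda>k. ?s 2 k / (8*pi) + ?c 3 k / (4*pi^2) - ?z 3 k / (4*pi^2)) sums
      (dbeta 2 / (8*pi) + zetaE 3 / 2^3 / (4*pi^2) - zetaE 3 / (4*pi^2))"
    by (intro sums_diff sums_add sums_divide sums_dbeta_sin sums_zetaE_cos sums_zetaE) simp_all
  also have "dbeta 2 / (8*pi) + zetaE 3 / 2^3 / (4*pi^2) - zetaE 3 / (4*pi^2)
      = dbeta 2 / (8*pi) - 7 * zetaE 3 / (32*pi^2)"
    by simp
  finally have "(\<lambda>k. (-1)^k / real (k+1) * (sin (pi * real (k+1) / 2) / (8*pi*real (k+1))
      + (cos (pi * real (k+1) / 2) - 1) / (4*pi^2*real (k+1)^2))) sums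
      (dbeta 2 / (8*pi) - 7 * zetaE 3 / (32*pi^2))"
    by (simp only: coeff[OF nonzero])
  from integral_ln_two_cos_termwise[OF has_integral_x1_cos this] show ?thesis
    by simp
qed

lemma integral_x2_ln_two_cos:
  "integral {0..1/4} (\<lambda>x. x^2 * ln (2 * cos (pi*x))) =
     dbeta 2 / (32*pi) + zetaE 3 / (64*pi^2) - dbeta 4 / (4*pi^3)"
proof -
  let ?s = "\<lambda>p k. (-1)^k * sin (pi * real (k+1) / 2) / real (k+1)^p"
  let ?c = "\<lambda>p k. (-1)^k * cos (pi * real (k+1) / 2) / real (k+1)^p"
  have nonzero: "real (k+1) \<noteq> 0" for k :: nat
    by simp
  have coeff: "sg / K * (sn / (32*pi*K) + cs / (8*pi^2*K^2) - sn / (4*pi^3*K^3))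
      = sg * sn / K^2 / (32*pi) + sg * cs / K^3 / (8*pi^2) - sg * sn / K^4 / (4*pi^3)"
    if "K \<noteq> 0" for sg sn cs K :: real
    using that by (simp add: field_simps power2_eq_square power3_eq_cube power4_eq_xxxx)
  have "(\<lambda>k. ?s 2 k / (32*pi) + ?c 3 k / (8*pi^2) - ?s 4 k / (4*pi^3)) sums
      (dbeta 2 / (32*pi) + zetaE 3 / 2^3 / (8*pi^2) - dbeta 4 / (4*pi^3))"
    by (intro sums_diff sums_add sums_divide sums_dbeta_sin sums_zetaE_cos) simp_all
  also have "dbeta 2 / (32*pi) + zetaE 3 / 2^3 / (8*pi^2) - dbeta 4 / (4*pi^3)
      = dbeta 2 / (32*pi) + zetaE 3 / (64*pi^2) - dbeta 4 / (4*pi^3)"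
    by simp
  finally have "(\<lambda>k. (-1)^k / real (k+1) * (sin (pi * real (k+1) / 2) / (32*pi*real (k+1))
      + cos (pi * real (k+1) / 2) / (8*pi^2*real (k+1)^2)
      - sin (pi * real (k+1) / 2) / (4*pi^3*real (k+1)^3))) sums
      (dbeta 2 / (32*pi) + zetaE 3 / (64*pi^2) - dbeta 4 / (4*pi^3))"
    by (simp only: coeff[OF nonzero])
  from integral_ln_two_cos_termwise[OF has_integral_x2_cos this] show ?thesis
    by simp
qed

lemma integral_x3_ln_two_cos:
  "integral {0..1/4} (\<lambda>x. x^3 * ln (2 * cos (pi*x))) =
     dbeta 2 / (128*pi) + 3 * zetaE 3 / (512*pi^2) - 3 * dbeta 4 / (16*pi^3) + 93 * zetaE 5 / (256*pi^4)"
proof -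
  let ?s = "\<lambda>p k. (-1)^k * sin (pi * real (k+1) / 2) / real (k+1)^p"
  let ?c = "\<lambda>p k. (-1)^k * cos (pi * real (k+1) / 2) / real (k+1)^p"
  let ?z = "\<lambda>p k. (-1)^k / real (k+1)^p"
  have nonzero: "real (k+1) \<noteq> 0" for k :: nat
    by simp
  have coeff: "sg / K * (sn / (128*pi*K) + 3 * cs / (64*pi^2*K^2) - 3 * sn / (16*pi^3*K^3)
        - 3 * (cs - 1) / (8*pi^4*K^4))
      = sg * sn / K^2 / (128*pi) + 3 * (sg * cs / K^3) / (64*pi^2) - 3 * (sg * sn / K^4) / (16*pi^3)
        - 3 * (sg * cs / K^5) / (8*pi^4) + 3 * (sg / K^5) / (8*pi^4)"
    if "K \<noteq> 0" for sg sn cs K :: real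
  proof -
    have "K^5 = K * K * K * K * K"
      by (simp add: numeral_eq_Suc)
    then show ?thesis
      using that by (simp add: field_simps power2_eq_square power3_eq_cube power4_eq_xxxx)
  qed
  have "(\<lambda>k. ?s 2 k / (128*pi) + 3 * ?c 3 k / (64*pi^2) - 3 * ?s 4 k / (16*pi^3)
        - 3 * ?c 5 k / (8*pi^4) + 3 * ?z 5 k / (8*pi^4)) sums
      (dbeta 2 / (128*pi) + 3 * (zetaE 3 / 2^3) / (64*pi^2) - 3 * dbeta 4 / (16*pi^3)
        - 3 * (zetaE 5 / 2^5) / (8*pi^4) + 3 * zetaE 5 / (8*pi^4))"
    by (intro sums_diff sums_add sums_divide sums_mult sums_dbeta_sin sums_zetaE_cos sums_zetaE) simp_all
  also have "dbeta 2 / (128*pi) + 3 * (zetaE 3 / 2^3) / (64*pi^2) - 3 * dbeta 4 / (16*pi^3)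
        - 3 * (zetaE 5 / 2^5) / (8*pi^4) + 3 * zetaE 5 / (8*pi^4)
      = dbeta 2 / (128*pi) + 3 * zetaE 3 / (512*pi^2) - 3 * dbeta 4 / (16*pi^3) + 93 * zetaE 5 / (256*pi^4)"
    by (simp add: field_simps)
  finally have "(\<lambda>k. (-1)^k / real (k+1) * (sin (pi * real (k+1) / 2) / (128*pi*real (k+1))
      + 3 * cos (pi * real (k+1) / 2) / (64*pi^2*real (k+1)^2)
      - 3 * sin (pi * real (k+1) / 2) / (16*pi^3*real (k+1)^3)
      - 3 * (cos (pi * real (k+1) / 2) - 1) / (8*pi^4*real (k+1)^4))) sums
      (dbeta 2 / (128*pi) + 3 * zetaE 3 / (512*pi^2) - 3 * dbeta 4 / (16*pi^3) + 93 * zetaE 5 / (256*pi^4))"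
    by (simp only: coeff[OF nonzero])
  from integral_ln_two_cos_termwise[OF has_integral_x3_cos this] show ?thesis
    by simp
qed

lemma integral_ln_cos_eq_ln_two_cos:
  fixes b :: real
  assumes "0 \<le> b" "b < 1/2"
  shows "integral {0..b} (\<lambda>x. x^j * ln (cos (pi*x))) =
           integral {0..b} (\<lambda>x. x^j * ln (2 * cos (pi*x))) - ln 2 * b^(j+1) / real (j+1)"
proof -
  have cos_pos: "cos (pi*x) > 0" if "x \<in> {0..b}" for x
    using that assms by (intro cos_pi_pos) auto
  then have "(\<lambda>x. x^j * ln (2 * cos (pi*x))) integrable_on {0..b}"
    by (intro integrable_continuous_interval continuous_intros) (simp add: less_imp_neq[symmetric])
  moreover have "((\<lambda>x. x^j * ln 2) has_integral (ln 2 * b^(j+1) / real (j+1) - ln 2 * 0^(j+1) / real (j+1))) {0..b}"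
    using assms
    by (intro has_integral_real_antiderivative) (auto intro!: derivative_eq_intros simp del: power_Suc)
  ultimately have "((\<lambda>x. x^j * ln (2 * cos (pi*x)) - x^j * ln 2) has_integral
      integral {0..b} (\<lambda>x. x^j * ln (2 * cos (pi*x))) - ln 2 * b^(j+1) / real (j+1)) {0..b}"
    by (auto intro: has_integral_diff)
  then have "((\<lambda>x. x^j * ln (cos (pi*x))) has_integral
      integral {0..b} (\<lambda>x. x^j * ln (2 * cos (pi*x))) - ln 2 * b^(j+1) / real (j+1)) {0..b}"
  proof (rule has_integral_eq[rotated])
    fix x assume "x \<in> {0..b}"
    then have "ln (2 * cos (pi*x)) = ln 2 + ln (cos (pi*x))"
      by (intro ln_mult_pos cos_pos) auto
    then show "x^j * ln (2 * cos (pi*x)) - x^j * ln 2 = x^j * ln (cos (pi*x))"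
      by (simp add: algebra_simps)
  qed
  then show ?thesis
    by (rule integral_unique)
qed

lemma logC_quarter:
  assumes "integral {0..1/4} (\<lambda>x. x^j * ln (2 * cos (pi*x))) = E" and "r = j + 2"
  shows "logC r (1/4) = complex_of_real ((1/4)^(j+1) * ln 2 / 2 - real (j+1) * E)"
proof -
  have "complex_of_real (1/4) = 1/4"
    by simp
  then have "logC r (1/4) = complex_of_real ((1/4)^(j+1) * ln (cos (pi*(1/4)))
      - real (j+1) * integral {0..1/4} (\<lambda>t. t^j * ln (cos (pi*t))))"
    using logC_eq_integral_ln_cos[of "1/4" j] assms(2) by simp
  also have "ln (cos (pi*(1/4))) = - ln 2 / 2"
    by (simp add: cos_45 ln_div ln_sqrt)
  also have "integral {0..1/4} (\<lambda>t. t^j * ln (cos (pi*t))) = E - ln 2 * (1/4)^(j+1) / real (j+1)"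
    using integral_ln_cos_eq_ln_two_cos[of "1/4" j] assms(1) by simp
  also have "(1/4)^(j+1) * (- ln 2 / 2) - real (j+1) * (E - ln 2 * (1/4)^(j+1) / real (j+1))
      = (1/4)^(j+1) * ln 2 / 2 - real (j+1) * E"
  proof -
    have "real (j+1) * (ln 2 * (1/4)^(j+1) / real (j+1)) = ln 2 * (1/4)^(j+1)"
      using nonzero_mult_div_cancel_left[of "real (j+1)" "ln 2 * (1/4)^(j+1)"] by simp
    then show ?thesis
      by (simp only: right_diff_distrib) simp
  qed
  finally show ?thesis .
qed

theorem corollary2p6:
  shows "(logC 2 (1/4) = complex_of_real (ln 2 / 8 - catalan / (2 * pi))) \<and>
          (logC 3 (1/4) = complex_of_real (ln 2 / 32 - catalan / (4 * pi)
                          + 7 * zetaE 3 / (16 * pi ^ 2))) \<and>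
          (logC 4 (1/4) = complex_of_real (ln 2 / 128 - 3 * catalan / (32 * pi)
                          - 3 * zetaE 3 / (64 * pi ^ 2) + 3 * dbeta 4 / (4 * pi ^ 3))) \<and>
          (logC 5 (1/4) = complex_of_real (ln 2 / 512 - catalan / (32 * pi)
                          - 3 * zetaE 3 / (128 * pi ^ 2) + 3 * dbeta 4 / (4 * pi ^ 3)
                          - 93 * zetaE 5 / (64 * pi ^ 4)))"
  by (simp only: of_real_eq_iff
        logC_quarter[OF integral_x0_ln_two_cos, of 2] logC_quarter[OF integral_x1_ln_two_cos, of 3]
        logC_quarter[OF integral_x2_ln_two_cos, of 4] logC_quarter[OF integral_x3_ln_two_cos, of 5])
    (simp add: catalan_def field_simps)

end
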